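(* Fix a total number $N_{\text{total}} > 0$ of collected data samples, split into $E_N = N_{\text{total}}/E_L$ episodes each of fixed length $E_L \in \{1,2,\dots\}$. Let $P_s(l)$ be the probability that the state at interaction step $l$ of an episode is secure, where $P_s$ does not depend on $E_L$, and define the expected number of secure state visits over all episodes as \[ N_s(E_L) = \frac{N_{\text{total}}}{E_L}\sum_{l=1}^{E_L} P_s(l). \] Then $N_s$ remains constant or increases when $E_L$ is reduced; that is, $N_s(E_L+1) \le N_s(E_L)$ for every $E_L \ge 1$.
   Context: A dead-end state is a state from which, once reached at some step of a trajectory, no policy can lead to the goal state at any later step; a secure state is a state that is not a dead-end state. The dead-end set is absorbing along trajectories (once in a dead-end state, all subsequent states are dead-end states), so that $P_s(l) = \prod_{k=1}^{l}(1-P_d(k))$ with $P_d(k) \in [0,1]$ the probability of falling into a dead-end state at step $k$; in particular $P_s$ is a non-increasing function of the interaction step $l$. *)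

theory Defs
  imports Complex_Main
begin

text \<open>Probability of being in a secure state at interaction step l, given
  the per-step probabilities Pd k of falling into a dead-end state.\<close>
definition Ps :: "(nat \<Rightarrow> real) \<Rightarrow> nat \<Rightarrow> real" where
  "Ps Pd l = (\<Prod>k = 1..l. 1 - Pd k)"

definition Ns :: "real \<Rightarrow> (nat \<Rightarrow> real) \<Rightarrow> nat \<Rightarrow> real" where
  "Ns Ntotal P EL = Ntotal / real EL * (\<Sum>l = 1..EL. P l)"

end

theory Submission
  imports Defs
begin

text \<open>Ns is Ntotal times the running average of Ps over the first EL steps. Since every factor
  1 - Pd k lies in [0, 1], Ps is non-increasing, and the running average of a non-increasing
  sequence can only decrease when one more (smaller) term is appended.\<close>

lemma Ps_Suc: "Ps Pd (Suc l) = Ps Pd l * (1 - Pd (Suc l))"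
  unfolding Ps_def by (simp add: prod.nat_ivl_Suc' mult.commute)

lemma Ps_nonneg:
  assumes "\<And>k. 0 \<le> Pd k \<and> Pd k \<le> 1"
  shows "0 \<le> Ps Pd l"
  unfolding Ps_def using assms by (intro prod_nonneg) auto

lemma decseq_Ps:
  assumes "\<And>k. 0 \<le> Pd k \<and> Pd k \<le> 1"
  shows "decseq (Ps Pd)"
proof (rule decseq_SucI)
  fix l
  show "Ps Pd (Suc l) \<le> Ps Pd l"
    unfolding Ps_Suc using Ps_nonneg[OF assms, where l = l] assms[of "Suc l"]
    by (simp add: mult_left_le)
qed

lemma average_Suc_le_average:
  fixes f :: "nat \<Rightarrow> 'a :: linordered_field"
  assumes "decseq f" and "n \<ge> 1"
  shows "(\<Sum>l = 1..Suc n. f l) / of_nat (Suc n) \<le> (\<Sum>l = 1..n. f l) / of_nat n"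
proof -
  define S where "S = (\<Sum>l = 1..n. f l)"
  have "(\<Sum>l = 1..n. f (Suc n)) \<le> S"
    unfolding S_def using assms(1) by (intro sum_mono) (simp add: decseqD)
  then have "of_nat n * f (Suc n) \<le> S" by simp
  moreover have "(0::'a) < of_nat n" using assms(2) by simp
  ultimately have "(S + f (Suc n)) / of_nat (Suc n) \<le> S / of_nat n"
    by (simp add: divide_simps algebra_simps add_pos_pos)
  then show ?thesis by (simp add: S_def)
qed

theorem theorem1:
  fixes Ntotal :: real and Pd :: "nat \<Rightarrow> real" and EL :: nat
  assumes "Ntotal > 0"
    and "\<And>k. 0 \<le> Pd k \<and> Pd k \<le> 1"
    and "EL \<ge> 1"
  shows "Ns Ntotal (Ps Pd) (EL + 1) \<le> Ns Ntotal (Ps Pd) EL"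
proof -
  have "(\<Sum>l = 1..Suc EL. Ps Pd l) / real (Suc EL) \<le> (\<Sum>l = 1..EL. Ps Pd l) / real EL"
    using average_Suc_le_average[OF decseq_Ps[OF assms(2)] assms(3)] .
  then have "Ntotal * ((\<Sum>l = 1..Suc EL. Ps Pd l) / real (Suc EL))
      \<le> Ntotal * ((\<Sum>l = 1..EL. Ps Pd l) / real EL)"
    using assms(1) by (intro mult_left_mono) auto
  then show ?thesis
    unfolding Ns_def by (simp add: times_divide_eq_right)
qed

end
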